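(* Let $\mathbb{H}=\{(z_1,z_2)\in \mathbb{C}^2:|z_2|<|z_1|<1\}$ be the Hartogs triangle. Then the Berezin transform $B_{\mathbb{H}}$ is not a bounded mapping on $L^2(\mathbb{H})$; that is, there is no constant $C<\infty$ such that $\|B_{\mathbb{H}}f\|_{L^2(\mathbb{H})}\leq C\|f\|_{L^2(\mathbb{H})}$ for all $f$ in $L^2(\mathbb{H})$ for which $B_{\mathbb{H}}f$ is defined by the integral formula below.
   Context: $K_{\mathbb{H}}$ denotes the Bergman kernel of $\mathbb{H}$ (the reproducing kernel of the Bergman space $A^2(\mathbb{H})$ of square-integrable holomorphic functions on $\mathbb{H}$); explicitly $K_{\mathbb{H}}(w,z)=\frac{w_1\overline{z}_1}{\pi^2(w_1\overline{z}_1-w_2\overline{z}_2)^2(1-w_1\overline{z}_1)^2}$, and $K_{\mathbb{H}}(z,z)>0$ for all $z\in\mathbb{H}$. The Berezin transform of a function $f$ on $\mathbb{H}$ is $B_{\mathbb{H}}f(z)=\int_{\mathbb{H}} f(w)\,\frac{|K_{\mathbb{H}}(w,z)|^2}{K_{\mathbb{H}}(z,z)}\,dV(w)$, $z\in\mathbb{H}$, where $dV$ is Lebesgue measure. *)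

theory Defs
  imports "HOL-Analysis.Analysis"
begin

definition hartogs :: "(complex \<times> complex) set" where
  "hartogs = {(z1, z2). cmod z2 < cmod z1 \<and> cmod z1 < 1}"

definition bergman_H :: "complex \<times> complex \<Rightarrow> complex \<times> complex \<Rightarrow> complex" where
  "bergman_H w z =
     (fst w * cnj (fst z)) /
     (complex_of_real (pi ^ 2) * (fst w * cnj (fst z) - snd w * cnj (snd z)) ^ 2
        * (1 - fst w * cnj (fst z)) ^ 2)"

definition berezin_H :: "(complex \<times> complex \<Rightarrow> complex) \<Rightarrow> complex \<times> complex \<Rightarrow> complex" where
  "berezin_H f z =
     integral\<^sup>L (lebesgue_on hartogs)
       (\<lambda>w. f w * complex_of_real ((cmod (bergman_H w z))\<^sup>2 / Re (bergman_H z z)))"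

definition L2_H :: "(complex \<times> complex \<Rightarrow> complex) \<Rightarrow> bool" where
  "L2_H f \<longleftrightarrow> f \<in> borel_measurable (lebesgue_on hartogs) \<and>
     integrable (lebesgue_on hartogs) (\<lambda>w. (cmod (f w))\<^sup>2)"

definition berezin_defined :: "(complex \<times> complex \<Rightarrow> complex) \<Rightarrow> bool" where
  "berezin_defined f \<longleftrightarrow> (\<forall>z\<in>hartogs. integrable (lebesgue_on hartogs)
       (\<lambda>w. f w * complex_of_real ((cmod (bergman_H w z))\<^sup>2 / Re (bergman_H z z))))"

definition L2norm_sq_H :: "(complex \<times> complex \<Rightarrow> complex) \<Rightarrow> ennreal" where
  "L2norm_sq_H f = (\<integral>\<^sup>+ w. ennreal ((cmod (f w))\<^sup>2) \<partial>(lebesgue_on hartogs))"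

end

theory Submission
  imports Defs
begin

(*
  For z in the fixed box Z = scaled_box (1/4) and all w in H the Berezin kernel is bounded below
  by c / |w_1|^2 with an absolute constant c > 0, because the two denominators of K(w, z) are at
  most 2 |w_1| and 2.  Hence for g >= 0 the transform B g is at least c times the integral of
  g(w) / |w_1|^2 on Z; for g = 1_U / |w_1|^2 this integral is ||g||^2, so
  ||B g||^2 >= c^2 |Z| ||g||^4.  But |w_1|^(-2) is not square integrable on H: its square has
  integral at least 1/100 over each of the disjoint boxes scaled_box (2^(-k) / 4), independently
  of k.  Taking for U the union of the first n of these boxes makes ||g|| arbitrarily large,
  which is incompatible with ||B g|| <= C ||g||.
*)

subsection \<open>Lebesgue measure on the Hartogs triangle\<close>

lemma mem_hartogs: "z \<in> hartogs \<longleftrightarrow> cmod (snd z) < cmod (fst z) \<and> cmod (fst z) < 1"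
  by (cases z) (simp add: hartogs_def)

lemma hartogs_norm_fst_pos: "w \<in> hartogs \<Longrightarrow> 0 < cmod (fst w)"
  using norm_ge_zero[of "snd w"] unfolding mem_hartogs by linarith

lemma open_hartogs: "open hartogs"
proof -
  have eq: "hartogs = {p. cmod (snd p) < cmod (fst p)} \<inter> {p. cmod (fst p) < 1}"
    by (auto simp: hartogs_def)
  show ?thesis
    unfolding eq by (intro open_Int open_Collect_less continuous_intros)
qed

lemma hartogs_in_borel [measurable]: "hartogs \<in> sets borel"
  by (simp add: open_hartogs borel_open)

lemma bounded_hartogs: "bounded hartogs"
  unfolding bounded_iff
proof (intro exI[of _ 2] ballI)
  fix w assume "w \<in> hartogs"
  then have "cmod (snd w) < 1" "cmod (fst w) < 1"
    by (simp_all add: mem_hartogs)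
  then show "norm w \<le> 2"
    using norm_Pair_le[of "fst w" "snd w"] by simp
qed

lemma emeasure_lebesgue_on_hartogs:
  "A \<subseteq> hartogs \<Longrightarrow> A \<in> sets borel \<Longrightarrow> emeasure (lebesgue_on hartogs) A = emeasure lborel A"
  by (simp add: emeasure_restrict_space)

lemma sets_lebesgue_on_hartogs:
  "A \<subseteq> hartogs \<Longrightarrow> A \<in> sets borel \<Longrightarrow> A \<in> sets (lebesgue_on hartogs)"
  by (simp add: sets_restrict_space_iff)

lemma finite_measure_lebesgue_on_hartogs: "finite_measure (lebesgue_on hartogs)"
proof (rule finite_measureI)
  have "emeasure lborel hartogs < \<infinity>"
    using emeasure_bounded_finite[OF bounded_hartogs] by simp
  then show "emeasure (lebesgue_on hartogs) (space (lebesgue_on hartogs)) \<noteq> \<infinity>"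
    by (simp add: emeasure_lebesgue_on_hartogs)
qed

lemma borel_measurable_lebesgue_on:
  "f \<in> borel_measurable borel \<Longrightarrow> f \<in> borel_measurable (lebesgue_on S)"
  by (intro measurable_restrict_space1 measurable_completion) simp

lemma emeasure_times_le_nn_integral:
  assumes "A \<in> sets M" and "\<And>x. x \<in> A \<Longrightarrow> c \<le> f x"
  shows "c * emeasure M A \<le> (\<integral>\<^sup>+x. f x \<partial>M)"
proof -
  have "c * emeasure M A = (\<integral>\<^sup>+x. c * indicator A x \<partial>M)"
    using assms(1) by (simp add: nn_integral_cmult_indicator)
  also have "\<dots> \<le> (\<integral>\<^sup>+x. f x \<partial>M)"
    using assms(2) by (intro nn_integral_mono) (simp split: split_indicator)
  finally show ?thesis .
qed

lemma L2_H_of_bounded: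
  assumes "f \<in> borel_measurable borel" and "\<And>w. w \<in> hartogs \<Longrightarrow> cmod (f w) \<le> c"
  shows "L2_H f"
proof -
  interpret finite_measure "lebesgue_on hartogs"
    by (rule finite_measure_lebesgue_on_hartogs)
  have [measurable]: "f \<in> borel_measurable (lebesgue_on hartogs)"
    using assms(1) by (rule borel_measurable_lebesgue_on)
  have "integrable (lebesgue_on hartogs) (\<lambda>w. (cmod (f w))\<^sup>2)"
    by (rule integrable_const_bound[where B = "c\<^sup>2"])
       (use assms(2) in \<open>auto intro!: AE_I2 power_mono\<close>)
  then show ?thesis
    by (simp add: L2_H_def)
qed

lemma L2norm_sq_H_of_real:
  assumes "L2_H (\<lambda>w. of_real (g w))"
  shows "L2norm_sq_H (\<lambda>w. of_real (g w)) = ennreal (\<integral>w. (g w)\<^sup>2 \<partial>lebesgue_on hartogs)"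
  using assms unfolding L2norm_sq_H_def L2_H_def by (simp add: nn_integral_eq_integral)

subsection \<open>The Berezin kernel\<close>

definition berezin_kernel :: "complex \<times> complex \<Rightarrow> complex \<times> complex \<Rightarrow> real" where
  "berezin_kernel w z = (cmod (bergman_H w z))\<^sup>2 / Re (bergman_H z z)"

definition diag_factor :: "complex \<times> complex \<Rightarrow> real" where
  "diag_factor z = ((cmod (fst z))\<^sup>2 - (cmod (snd z))\<^sup>2)\<^sup>2 * (1 - (cmod (fst z))\<^sup>2)\<^sup>2"

lemma diag_factor_pos:
  assumes "z \<in> hartogs"
  shows "0 < diag_factor z"
proof -
  have "cmod (snd z) < cmod (fst z)" "cmod (fst z) < 1"
    using assms by (simp_all add: mem_hartogs)
  then have "0 < (cmod (fst z))\<^sup>2 - (cmod (snd z))\<^sup>2" "0 < 1 - (cmod (fst z))\<^sup>2"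
    by (simp_all add: power_strict_mono abs_square_less_1)
  then show ?thesis
    unfolding diag_factor_def by (intro mult_pos_pos zero_less_power)
qed

lemma Re_bergman_H_diag: "Re (bergman_H z z) = (cmod (fst z))\<^sup>2 / (pi\<^sup>2 * diag_factor z)"
proof -
  have "bergman_H z z = of_real ((cmod (fst z))\<^sup>2 / (pi\<^sup>2 * diag_factor z))"
    unfolding bergman_H_def diag_factor_def complex_norm_square[symmetric] by simp
  then show ?thesis
    by simp
qed

lemma norm_bergman_H:
  "cmod (bergman_H w z) = cmod (fst w) * cmod (fst z) /
     (pi\<^sup>2 * (cmod (fst w * cnj (fst z) - snd w * cnj (snd z)))\<^sup>2 * (cmod (1 - fst w * cnj (fst z)))\<^sup>2)"
  unfolding bergman_H_def by (simp add: norm_divide norm_mult norm_power)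

lemma berezin_kernel_eq:
  assumes "z \<in> hartogs"
  shows "berezin_kernel w z = (cmod (fst w))\<^sup>2 * diag_factor z /
    (pi\<^sup>2 * (cmod (fst w * cnj (fst z) - snd w * cnj (snd z)))^4 * (cmod (1 - fst w * cnj (fst z)))^4)"
proof -
  show ?thesis
    using hartogs_norm_fst_pos[OF assms] diag_factor_pos[OF assms]
    unfolding berezin_kernel_def Re_bergman_H_diag norm_bergman_H by (simp add: divide_simps)
qed

lemma hartogs_kernel_denominator_bounds:
  assumes "z \<in> hartogs" and "w \<in> hartogs"
  shows "cmod (fst w) * (cmod (fst z) - cmod (snd z)) \<le> cmod (fst w * cnj (fst z) - snd w * cnj (snd z))"
    and "cmod (fst w * cnj (fst z) - snd w * cnj (snd z)) \<le> 2 * cmod (fst w)"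
    and "1 - cmod (fst z) \<le> cmod (1 - fst w * cnj (fst z))"
    and "cmod (1 - fst w * cnj (fst z)) \<le> 2"
proof -
  define a b x y where "a = cmod (fst w)" and "b = cmod (snd w)"
    and "x = cmod (fst z)" and "y = cmod (snd z)"
  have xy: "0 \<le> y" "y < x" "x < 1" and ab: "0 \<le> b" "b < a" "a < 1"
    using assms by (auto simp: mem_hartogs a_def b_def x_def y_def)
  have D1: "a * x - b * y \<le> cmod (fst w * cnj (fst z) - snd w * cnj (snd z))"
           "cmod (fst w * cnj (fst z) - snd w * cnj (snd z)) \<le> a * x + b * y"
    unfolding a_def b_def x_def y_def
    by (metis complex_mod_cnj norm_mult norm_triangle_ineq2,
        metis complex_mod_cnj norm_mult norm_triangle_ineq4)
  have D2: "1 - a * x \<le> cmod (1 - fst w * cnj (fst z))" "cmod (1 - fst w * cnj (fst z)) \<le> 1 + a * x"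
    unfolding a_def x_def
    by (metis complex_mod_cnj norm_mult norm_one norm_triangle_ineq2,
        metis complex_mod_cnj norm_mult norm_one norm_triangle_ineq4)
  have "b * y \<le> a * y" "a * x \<le> a" "a * x \<le> x" "b * y \<le> b"
    using xy ab by (simp_all add: mult_right_mono mult_left_le mult_left_le_one_le)
  with D1 D2 ab show "a * (x - y) \<le> cmod (fst w * cnj (fst z) - snd w * cnj (snd z))"
    and "cmod (fst w * cnj (fst z) - snd w * cnj (snd z)) \<le> 2 * a"
    and "1 - x \<le> cmod (1 - fst w * cnj (fst z))"
    and "cmod (1 - fst w * cnj (fst z)) \<le> 2"
    unfolding right_diff_distrib by linarith+
qed

lemma berezin_kernel_ge:
  assumes "z \<in> hartogs" and "w \<in> hartogs"
  shows "diag_factor z / (256 * pi\<^sup>2 * (cmod (fst w))\<^sup>2) \<le> berezin_kernel w z"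
proof -
  define a D1 D2 where "a = cmod (fst w)"
    and "D1 = cmod (fst w * cnj (fst z) - snd w * cnj (snd z))"
    and "D2 = cmod (1 - fst w * cnj (fst z))"
  note bounds = hartogs_kernel_denominator_bounds[OF assms, folded a_def D1_def D2_def]
  have "0 < a" "0 < cmod (fst z) - cmod (snd z)" "0 < 1 - cmod (fst z)"
    using assms hartogs_norm_fst_pos[OF assms(2)] by (simp_all add: mem_hartogs a_def)
  then have "0 < a * (cmod (fst z) - cmod (snd z))"
    by simp
  then have pos: "0 < D1" "0 < D2"
    using bounds(1,3) \<open>0 < 1 - cmod (fst z)\<close> by linarith+
  have "D1^4 * D2^4 \<le> (2 * a)^4 * 2^4"
    using bounds pos by (intro mult_mono power_mono) auto
  then have "a\<^sup>2 * diag_factor z / (pi\<^sup>2 * ((2 * a)^4 * 2^4)) \<le> a\<^sup>2 * diag_factor z / (pi\<^sup>2 * (D1^4 * D2^4))"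
    using pos \<open>0 < a\<close> diag_factor_pos[OF assms(1)]
    by (intro divide_left_mono mult_left_mono) auto
  moreover have "a\<^sup>2 * diag_factor z / (pi\<^sup>2 * ((2 * a)^4 * 2^4)) = diag_factor z / (256 * pi\<^sup>2 * a\<^sup>2)"
    using \<open>0 < a\<close> by (simp add: field_simps power2_eq_square power4_eq_xxxx)
  ultimately show ?thesis
    unfolding berezin_kernel_eq[OF assms(1)] a_def D1_def D2_def by (simp add: mult.assoc)
qed

lemma berezin_kernel_le:
  assumes "z \<in> hartogs" and "w \<in> hartogs"
  shows "berezin_kernel w z \<le> diag_factor z /
    (pi\<^sup>2 * (cmod (fst w))\<^sup>2 * (cmod (fst z) - cmod (snd z))^4 * (1 - cmod (fst z))^4)"
proof -
  define a d e D1 D2 where "a = cmod (fst w)" and "d = cmod (fst z) - cmod (snd z)"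
    and "e = 1 - cmod (fst z)"
    and "D1 = cmod (fst w * cnj (fst z) - snd w * cnj (snd z))"
    and "D2 = cmod (1 - fst w * cnj (fst z))"
  note bounds = hartogs_kernel_denominator_bounds[OF assms, folded a_def d_def e_def D1_def D2_def]
  have pos: "0 < a" "0 < d" "0 < e"
    using assms hartogs_norm_fst_pos[OF assms(2)] by (simp_all add: mem_hartogs a_def d_def e_def)
  have le: "(a * d)^4 * e^4 \<le> D1^4 * D2^4"
    using bounds pos by (intro mult_mono power_mono) auto
  have "0 < (a * d)^4 * e^4"
    using pos by simp
  with le have "a\<^sup>2 * diag_factor z / (pi\<^sup>2 * (D1^4 * D2^4)) \<le> a\<^sup>2 * diag_factor z / (pi\<^sup>2 * ((a * d)^4 * e^4))"
    using diag_factor_pos[OF assms(1)]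
    by (intro divide_left_mono mult_left_mono mult_pos_pos) auto
  also have "\<dots> = diag_factor z / (pi\<^sup>2 * a\<^sup>2 * d^4 * e^4)"
    using pos by (simp add: field_simps power2_eq_square power4_eq_xxxx)
  finally show ?thesis
    unfolding berezin_kernel_eq[OF assms(1)] a_def d_def e_def D1_def D2_def by (simp add: mult.assoc)
qed

lemma berezin_kernel_nonneg: "z \<in> hartogs \<Longrightarrow> w \<in> hartogs \<Longrightarrow> 0 \<le> berezin_kernel w z"
  by (rule order_trans[OF _ berezin_kernel_ge]) (simp_all add: less_imp_le[OF diag_factor_pos])

lemma borel_measurable_berezin_kernel [measurable]:
  "(\<lambda>w. berezin_kernel w z) \<in> borel_measurable borel"
proof -
  have [measurable]: "(\<lambda>w. fst w * cnj (fst z)) \<in> borel_measurable borel"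
    "(\<lambda>w. complex_of_real (pi ^ 2) * (fst w * cnj (fst z) - snd w * cnj (snd z)) ^ 2
        * (1 - fst w * cnj (fst z)) ^ 2) \<in> borel_measurable borel"
    by (intro borel_measurable_continuous_onI continuous_intros)+
  show ?thesis
    unfolding berezin_kernel_def bergman_H_def by measurable
qed

lemma integrable_berezin_kernel_scaleR:
  fixes f :: "complex \<times> complex \<Rightarrow> 'b::{banach, second_countable_topology}"
  assumes z: "z \<in> hartogs" and f: "f \<in> borel_measurable borel"
    and bound: "\<And>w. w \<in> hartogs \<Longrightarrow> norm (f w) \<le> c * (cmod (fst w))\<^sup>2"
  shows "integrable (lebesgue_on hartogs) (\<lambda>w. berezin_kernel w z *\<^sub>R f w)"
proof -
  interpret finite_measure "lebesgue_on hartogs"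
    by (rule finite_measure_lebesgue_on_hartogs)
  define K where "K = diag_factor z / (pi\<^sup>2 * (cmod (fst z) - cmod (snd z))^4 * (1 - cmod (fst z))^4)"
  have [measurable]: "f \<in> borel_measurable (lebesgue_on hartogs)"
    "(\<lambda>w. berezin_kernel w z) \<in> borel_measurable (lebesgue_on hartogs)"
    by (simp_all add: f borel_measurable_lebesgue_on)
  show ?thesis
  proof (rule integrable_const_bound[where B = "c * K"])
    show "AE w in lebesgue_on hartogs. norm (berezin_kernel w z *\<^sub>R f w) \<le> c * K"
    proof (rule AE_I2)
      fix w assume "w \<in> space (lebesgue_on hartogs)"
      then have w: "w \<in> hartogs"
        by simp
      then have "0 < cmod (fst w)"
        by (rule hartogs_norm_fst_pos)
      have "norm (berezin_kernel w z *\<^sub>R f w) = berezin_kernel w z * norm (f w)"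
        using berezin_kernel_nonneg[OF z w] by simp
      also have "\<dots> \<le> K / (cmod (fst w))\<^sup>2 * (c * (cmod (fst w))\<^sup>2)"
        using berezin_kernel_le[OF z w] bound[OF w] berezin_kernel_nonneg[OF z w]
        by (intro mult_mono) (simp_all add: K_def field_simps order_trans[OF norm_ge_zero])
      also have "\<dots> = c * K"
        using \<open>0 < cmod (fst w)\<close> by simp
      finally show "norm (berezin_kernel w z *\<^sub>R f w) \<le> c * K" .
    qed
  qed measurable
qed

lemma berezin_definedI:
  assumes "f \<in> borel_measurable borel"
    and "\<And>w. w \<in> hartogs \<Longrightarrow> cmod (f w) \<le> c * (cmod (fst w))\<^sup>2"
  shows "berezin_defined f"
  unfolding berezin_defined_def
proof
  fix z assume "z \<in> hartogs"
  from integrable_berezin_kernel_scaleR[OF this assms]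
  show "integrable (lebesgue_on hartogs)
      (\<lambda>w. f w * complex_of_real ((cmod (bergman_H w z))\<^sup>2 / Re (bergman_H z z)))"
    by (simp add: berezin_kernel_def scaleR_conv_of_real mult.commute)
qed

lemma Re_berezin_H_of_real:
  "Re (berezin_H (\<lambda>w. of_real (g w)) z) = (\<integral>w. g w * berezin_kernel w z \<partial>lebesgue_on hartogs)"
proof -
  have "berezin_H (\<lambda>w. of_real (g w)) z = of_real (\<integral>w. g w * berezin_kernel w z \<partial>lebesgue_on hartogs)"
    unfolding berezin_H_def berezin_kernel_def of_real_mult[symmetric] by (rule integral_complex_of_real)
  then show ?thesis
    by simp
qed

subsection \<open>Boxes near the origin\<close>

definition scaled_box :: "real \<Rightarrow> (complex \<times> complex) set" where
  "scaled_box a = box (Complex a 0, Complex 0 0) (Complex (2 * a) a, Complex (a / 2) (a / 2))"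

lemma mem_scaled_box:
  "w \<in> scaled_box a \<longleftrightarrow> a < Re (fst w) \<and> Re (fst w) < 2 * a \<and> 0 < Im (fst w) \<and> Im (fst w) < a
     \<and> 0 < Re (snd w) \<and> Re (snd w) < a / 2 \<and> 0 < Im (snd w) \<and> Im (snd w) < a / 2"
  by (cases w) (auto simp: scaled_box_def box_def Basis_prod_def Basis_complex_def inner_Pair_0 ball_Un)

lemma scaled_box_in_borel [measurable]: "scaled_box a \<in> sets borel"
  unfolding scaled_box_def by (simp add: borel_open)

lemma emeasure_scaled_box: "0 < a \<Longrightarrow> emeasure lborel (scaled_box a) = ennreal (a^4 / 4)"
  unfolding scaled_box_def
  by (subst emeasure_lborel_box)
     (auto simp: Basis_prod_def Basis_complex_def inner_Pair_0 prod.union_disjoint power4_eq_xxxx)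

lemma disjoint_scaled_box: "2 * a \<le> b \<Longrightarrow> scaled_box a \<inter> scaled_box b = {}"
  by (auto simp: mem_scaled_box)

lemma norm_scaled_box:
  assumes "w \<in> scaled_box a"
  shows "a\<^sup>2 < (cmod (fst w))\<^sup>2" and "(cmod (fst w))\<^sup>2 < 5 * a\<^sup>2" and "(cmod (snd w))\<^sup>2 < a\<^sup>2 / 2"
proof -
  note m = assms[unfolded mem_scaled_box]
  have r1: "a\<^sup>2 < (Re (fst w))\<^sup>2" and r2: "(Re (fst w))\<^sup>2 < (2 * a)\<^sup>2" and r3: "(Im (fst w))\<^sup>2 < a\<^sup>2"
    and r4: "(Re (snd w))\<^sup>2 < (a / 2)\<^sup>2" and r5: "(Im (snd w))\<^sup>2 < (a / 2)\<^sup>2"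
    by (rule power_strict_mono; use m in linarith)+
  show "a\<^sup>2 < (cmod (fst w))\<^sup>2"
    using r1 zero_le_power2[of "Im (fst w)"] unfolding cmod_power2 by linarith
  show "(cmod (fst w))\<^sup>2 < 5 * a\<^sup>2"
    using r2 r3 by (simp add: cmod_power2 power_mult_distrib)
  show "(cmod (snd w))\<^sup>2 < a\<^sup>2 / 2"
    using r4 r5 by (simp add: cmod_power2 power_divide)
qed

lemma scaled_box_subset_hartogs:
  assumes "0 < a" and "a \<le> 1 / 4"
  shows "scaled_box a \<subseteq> hartogs"
proof
  fix w assume w: "w \<in> scaled_box a"
  have "a\<^sup>2 \<le> (1 / 4)\<^sup>2"
    using assms by (intro power_mono) auto
  then have "(cmod (snd w))\<^sup>2 < (cmod (fst w))\<^sup>2" "(cmod (fst w))\<^sup>2 < 1"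
    using norm_scaled_box[OF w] assms by (simp_all add: power_divide)
  then show "w \<in> hartogs"
    unfolding mem_hartogs by (simp add: power_less_imp_less_base abs_square_less_1)
qed

lemma diag_factor_ge_on_scaled_box: "z \<in> scaled_box (1 / 4) \<Longrightarrow> 1 / 4096 \<le> diag_factor z"
proof -
  assume z: "z \<in> scaled_box (1 / 4)"
  have "1 / 32 \<le> (cmod (fst z))\<^sup>2 - (cmod (snd z))\<^sup>2" "1 / 2 \<le> 1 - (cmod (fst z))\<^sup>2"
    using norm_scaled_box[OF z] by (simp_all add: power_divide)
  then have "(1 / 32)\<^sup>2 * (1 / 2)\<^sup>2 \<le> diag_factor z"
    unfolding diag_factor_def by (intro mult_mono power_mono) auto
  then show ?thesis
    by (simp add: power_divide)
qed

subsection \<open>Lower bounds for the Berezin transform\<close>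

lemma berezin_kernel_ge_on_scaled_box:
  assumes "z \<in> scaled_box (1 / 4)" and "w \<in> hartogs"
  shows "1 / (2^20 * pi\<^sup>2 * (cmod (fst w))\<^sup>2) \<le> berezin_kernel w z"
proof -
  have "1 / (2^20 * pi\<^sup>2 * (cmod (fst w))\<^sup>2) = (1 / 4096) / (256 * pi\<^sup>2 * (cmod (fst w))\<^sup>2)"
    by simp
  also have "\<dots> \<le> diag_factor z / (256 * pi\<^sup>2 * (cmod (fst w))\<^sup>2)"
    using assms by (intro divide_right_mono diag_factor_ge_on_scaled_box) auto
  also have "\<dots> \<le> berezin_kernel w z"
    using assms scaled_box_subset_hartogs[of "1 / 4"] by (intro berezin_kernel_ge) auto
  finally show ?thesis .
qed

lemma Re_berezin_H_ge_on_scaled_box: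
  assumes z: "z \<in> scaled_box (1 / 4)" and g: "g \<in> borel_measurable borel" "\<And>w. 0 \<le> g w"
    and bound: "\<And>w. w \<in> hartogs \<Longrightarrow> g w \<le> c * (cmod (fst w))\<^sup>2"
  shows "(\<integral>w. g w / (cmod (fst w))\<^sup>2 \<partial>lebesgue_on hartogs) / (2^20 * pi\<^sup>2)
    \<le> Re (berezin_H (\<lambda>w. of_real (g w)) z)"
proof -
  have zH: "z \<in> hartogs"
    using z scaled_box_subset_hartogs[of "1 / 4"] by auto
  have "integrable (lebesgue_on hartogs) (\<lambda>w. berezin_kernel w z *\<^sub>R g w)"
    using zH g bound by (intro integrable_berezin_kernel_scaleR) auto
  then have int: "integrable (lebesgue_on hartogs) (\<lambda>w. g w * berezin_kernel w z)"
    by (simp add: mult.commute)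
  have "(\<integral>w. g w / (cmod (fst w))\<^sup>2 \<partial>lebesgue_on hartogs) / (2^20 * pi\<^sup>2)
      = (\<integral>w. g w * (1 / (2^20 * pi\<^sup>2 * (cmod (fst w))\<^sup>2)) \<partial>lebesgue_on hartogs)"
    unfolding integral_divide_zero[symmetric]
    by (rule Bochner_Integration.integral_cong) (simp_all add: divide_divide_eq_left mult.commute)
  also have "\<dots> \<le> (\<integral>w. g w * berezin_kernel w z \<partial>lebesgue_on hartogs)"
    using int g(2) berezin_kernel_ge_on_scaled_box[OF z] berezin_kernel_nonneg[OF zH]
    by (intro integral_mono' mult_left_mono mult_nonneg_nonneg) auto
  finally show ?thesis
    by (simp add: Re_berezin_H_of_real)
qed

lemma L2norm_sq_berezin_H_ge:
  assumes g: "g \<in> borel_measurable borel" "\<And>w. 0 \<le> g w"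
    and bound: "\<And>w. w \<in> hartogs \<Longrightarrow> g w \<le> c * (cmod (fst w))\<^sup>2"
  shows "ennreal (((\<integral>w. g w / (cmod (fst w))\<^sup>2 \<partial>lebesgue_on hartogs) / (2^20 * pi\<^sup>2))\<^sup>2 / 1024)
    \<le> L2norm_sq_H (berezin_H (\<lambda>w. of_real (g w)))"
proof -
  define m where "m = (\<integral>w. g w / (cmod (fst w))\<^sup>2 \<partial>lebesgue_on hartogs) / (2^20 * pi\<^sup>2)"
  have "0 \<le> m"
    unfolding m_def using g(2) by (intro divide_nonneg_pos integral_nonneg_AE) auto
  have inner: "scaled_box (1 / 4) \<subseteq> hartogs"
    by (rule scaled_box_subset_hartogs) auto
  have "ennreal (m\<^sup>2 / 1024) = ennreal (m\<^sup>2) * emeasure (lebesgue_on hartogs) (scaled_box (1 / 4))"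
    by (simp add: emeasure_lebesgue_on_hartogs[OF inner] emeasure_scaled_box ennreal_mult[symmetric]
        power_divide)
  also have "\<dots> \<le> L2norm_sq_H (berezin_H (\<lambda>w. of_real (g w)))"
    unfolding L2norm_sq_H_def
  proof (rule emeasure_times_le_nn_integral)
    show "scaled_box (1 / 4) \<in> sets (lebesgue_on hartogs)"
      by (rule sets_lebesgue_on_hartogs[OF inner]) simp
  next
    fix z assume "z \<in> scaled_box (1 / 4)"
    then have "m \<le> cmod (berezin_H (\<lambda>w. of_real (g w)) z)"
      unfolding m_def using Re_berezin_H_ge_on_scaled_box[OF _ assms] complex_Re_le_cmod order_trans
      by blast
    then show "ennreal (m\<^sup>2) \<le> ennreal ((cmod (berezin_H (\<lambda>w. of_real (g w)) z))\<^sup>2)"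
      using \<open>0 \<le> m\<close> by (intro ennreal_leI power_mono)
  qed
  finally show ?thesis
    unfolding m_def .
qed

subsection \<open>Test functions at dyadic scales\<close>

definition dyadic_scale :: "nat \<Rightarrow> real" where
  "dyadic_scale k = 1 / (4 * 2^k)"

lemma dyadic_scale_pos: "0 < dyadic_scale k"
  and dyadic_scale_le: "dyadic_scale k \<le> 1 / 4"
  by (simp_all add: dyadic_scale_def)

lemma dyadic_scale_antimono: "j \<le> k \<Longrightarrow> dyadic_scale k \<le> dyadic_scale j"
  by (simp add: dyadic_scale_def divide_simps)

lemma dyadic_scale_double: "j < k \<Longrightarrow> 2 * dyadic_scale k \<le> dyadic_scale j"
proof -
  assume "j < k"
  then have "(2::real) ^ Suc j \<le> 2 ^ k"
    by (intro power_increasing) auto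
  then show ?thesis
    by (simp add: dyadic_scale_def divide_simps)
qed

lemma disjoint_family_dyadic_scaled_box: "disjoint_family (\<lambda>k. scaled_box (dyadic_scale k))"
  unfolding disjoint_family_on_def
proof (intro ballI impI)
  fix j k :: nat
  assume "j \<noteq> k"
  then consider "j < k" | "k < j"
    by linarith
  then show "scaled_box (dyadic_scale j) \<inter> scaled_box (dyadic_scale k) = {}"
    by cases (metis disjoint_scaled_box dyadic_scale_double Int_commute)+
qed

definition dyadic_boxes :: "nat \<Rightarrow> (complex \<times> complex) set" where
  "dyadic_boxes n = (\<Union>k<n. scaled_box (dyadic_scale k))"

lemma dyadic_boxes_in_borel [measurable]: "dyadic_boxes n \<in> sets borel"
  unfolding dyadic_boxes_def by (rule sets.finite_UN) simp_all

lemma norm_fst_dyadic_boxes: "w \<in> dyadic_boxes n \<Longrightarrow> dyadic_scale n < cmod (fst w)"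
proof -
  assume "w \<in> dyadic_boxes n"
  then obtain k where "k < n" and w: "w \<in> scaled_box (dyadic_scale k)"
    unfolding dyadic_boxes_def by blast
  have "(dyadic_scale k)\<^sup>2 < (cmod (fst w))\<^sup>2"
    using w by (rule norm_scaled_box(1))
  then have "dyadic_scale k < cmod (fst w)"
    by (rule power_less_imp_less_base) simp
  moreover have "dyadic_scale n \<le> dyadic_scale k"
    using \<open>k < n\<close> by (intro dyadic_scale_antimono) simp
  ultimately show ?thesis
    by linarith
qed

definition test_fun :: "nat \<Rightarrow> complex \<times> complex \<Rightarrow> real" where
  "test_fun n w = indicator (dyadic_boxes n) w / (cmod (fst w))\<^sup>2"

lemma borel_measurable_norm_fst_power [measurable]:
  "(\<lambda>w::complex \<times> complex. (cmod (fst w))^k) \<in> borel_measurable borel"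
  by (intro borel_measurable_continuous_onI continuous_intros)

lemma borel_measurable_test_fun [measurable]: "test_fun n \<in> borel_measurable borel"
  unfolding test_fun_def by measurable

lemma test_fun_nonneg: "0 \<le> test_fun n w"
  by (simp add: test_fun_def)

lemma test_fun_le: "test_fun n w \<le> (cmod (fst w))\<^sup>2 / dyadic_scale n ^ 4"
proof (cases "w \<in> dyadic_boxes n")
  case True
  then have "dyadic_scale n ^ 4 \<le> cmod (fst w) ^ 4"
    using norm_fst_dyadic_boxes[of w n] dyadic_scale_pos[of n] by (intro power_mono) auto
  then show ?thesis
    using True norm_fst_dyadic_boxes[of w n] dyadic_scale_pos[of n]
    by (simp add: test_fun_def divide_simps)
qed (simp add: test_fun_def)

lemma test_fun_sq:
  "(test_fun n w)\<^sup>2 = (\<Sum>k<n. indicator (scaled_box (dyadic_scale k)) w / (cmod (fst w))^4)"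
proof -
  have "indicator (dyadic_boxes n) w = (\<Sum>k<n. indicator (scaled_box (dyadic_scale k)) w :: real)"
    unfolding dyadic_boxes_def
    by (rule indicator_UN_disjoint) (auto intro: disjoint_family_on_mono[OF _ disjoint_family_dyadic_scaled_box])
  moreover have "(test_fun n w)\<^sup>2 = indicator (dyadic_boxes n) w / (cmod (fst w))^4"
    by (simp add: test_fun_def power_divide flip: power_mult split: split_indicator)
  ultimately show ?thesis
    by (simp add: sum_divide_distrib)
qed

lemma nn_integral_scaled_box_ge:
  assumes "0 < a" and "a \<le> 1 / 4"
  shows "ennreal (1 / 100)
    \<le> (\<integral>\<^sup>+w. ennreal (indicator (scaled_box a) w / (cmod (fst w))^4) \<partial>lebesgue_on hartogs)"
proof -
  have sub: "scaled_box a \<subseteq> hartogs"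
    using assms by (rule scaled_box_subset_hartogs)
  have "ennreal (1 / 100) = ennreal (1 / (25 * a^4)) * emeasure (lebesgue_on hartogs) (scaled_box a)"
    using assms(1) by (simp add: emeasure_lebesgue_on_hartogs[OF sub] emeasure_scaled_box ennreal_mult[symmetric])
  also have "\<dots> \<le> (\<integral>\<^sup>+w. ennreal (indicator (scaled_box a) w / (cmod (fst w))^4) \<partial>lebesgue_on hartogs)"
  proof (rule emeasure_times_le_nn_integral)
    show "scaled_box a \<in> sets (lebesgue_on hartogs)"
      by (rule sets_lebesgue_on_hartogs[OF sub]) simp
  next
    fix w assume w: "w \<in> scaled_box a"
    have "0 < a\<^sup>2"
      using assms(1) by simp
    then have "0 < (cmod (fst w))\<^sup>2"
      using norm_scaled_box(1)[OF w] by linarith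
    moreover have "((cmod (fst w))\<^sup>2)\<^sup>2 \<le> (5 * a\<^sup>2)\<^sup>2"
      using norm_scaled_box(2)[OF w] \<open>0 < (cmod (fst w))\<^sup>2\<close> by (intro power_mono) auto
    ultimately have "1 / (25 * a^4) \<le> indicator (scaled_box a) w / (cmod (fst w))^4"
      using w assms(1) by (simp add: frac_le power_mult_distrib flip: power_mult)
    then show "ennreal (1 / (25 * a^4)) \<le> ennreal (indicator (scaled_box a) w / (cmod (fst w))^4)"
      by (rule ennreal_leI)
  qed
  finally show ?thesis .
qed

lemma L2norm_sq_test_fun_ge: "ennreal (real n / 100) \<le> L2norm_sq_H (\<lambda>w. of_real (test_fun n w))"
proof -
  have "ennreal (real n / 100) = (\<Sum>k<n. ennreal (1 / 100))"
    by (simp add: ennreal_of_nat_eq_real_of_nat ennreal_mult[symmetric])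
  also have "\<dots> \<le> (\<Sum>k<n. \<integral>\<^sup>+w. ennreal (indicator (scaled_box (dyadic_scale k)) w / (cmod (fst w))^4)
      \<partial>lebesgue_on hartogs)"
    by (intro sum_mono nn_integral_scaled_box_ge dyadic_scale_pos dyadic_scale_le)
  also have "\<dots> = (\<integral>\<^sup>+w. ennreal ((test_fun n w)\<^sup>2) \<partial>lebesgue_on hartogs)"
  proof -
    have "(\<lambda>w. ennreal (indicator (scaled_box (dyadic_scale k)) w / (cmod (fst w))^4))
        \<in> borel_measurable (lebesgue_on hartogs)" for k
      by (intro borel_measurable_lebesgue_on) measurable
    then show ?thesis
      unfolding test_fun_sq by (subst nn_integral_sum[symmetric]) simp_all
  qed
  also have "\<dots> = L2norm_sq_H (\<lambda>w. of_real (test_fun n w))"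
    by (simp add: L2norm_sq_H_def)
  finally show ?thesis .
qed

lemma test_fun_le_on_hartogs: "w \<in> hartogs \<Longrightarrow> test_fun n w \<le> 1 / dyadic_scale n ^ 4"
proof -
  assume "w \<in> hartogs"
  then have "(cmod (fst w))\<^sup>2 \<le> 1"
    by (simp add: mem_hartogs abs_square_le_1)
  then show ?thesis
    by (rule order_trans[OF test_fun_le divide_right_mono]) simp
qed

lemma L2_H_test_fun: "L2_H (\<lambda>w. of_real (test_fun n w))"
  by (rule L2_H_of_bounded[where c = "1 / dyadic_scale n ^ 4"])
     (simp_all add: test_fun_nonneg test_fun_le_on_hartogs)

lemma berezin_defined_test_fun: "berezin_defined (\<lambda>w. of_real (test_fun n w))"
  by (rule berezin_definedI[where c = "1 / dyadic_scale n ^ 4"]) (simp_all add: test_fun_nonneg test_fun_le)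

lemma L2norm_sq_berezin_H_test_fun_ge:
  "ennreal (((\<integral>w. (test_fun n w)\<^sup>2 \<partial>lebesgue_on hartogs) / (2^20 * pi\<^sup>2))\<^sup>2 / 1024)
    \<le> L2norm_sq_H (berezin_H (\<lambda>w. of_real (test_fun n w)))"
proof -
  have "test_fun n w / (cmod (fst w))\<^sup>2 = (test_fun n w)\<^sup>2" for w
    by (simp add: test_fun_def power2_eq_square split: split_indicator)
  then show ?thesis
    using L2norm_sq_berezin_H_ge[where c = "1 / dyadic_scale n ^ 4", of "test_fun n"]
    by (simp add: test_fun_nonneg test_fun_le)
qed

lemma test_fun_count_le_if_berezin_bounded:
  assumes "L2norm_sq_H (berezin_H (\<lambda>w. of_real (test_fun n w)))
    \<le> ennreal (C\<^sup>2) * L2norm_sq_H (\<lambda>w. of_real (test_fun n w))"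
  shows "real n \<le> 102400 * (2^20 * pi\<^sup>2)\<^sup>2 * C\<^sup>2"
proof -
  define k :: real where "k = 2^20 * pi\<^sup>2"
  define m where "m = (\<integral>w. (test_fun n w)\<^sup>2 \<partial>lebesgue_on hartogs)"
  have norm_f: "L2norm_sq_H (\<lambda>w. of_real (test_fun n w)) = ennreal m"
    unfolding m_def by (rule L2norm_sq_H_of_real[OF L2_H_test_fun])
  have "0 \<le> m"
    unfolding m_def by (rule integral_nonneg_AE) simp
  then have "real n / 100 \<le> m"
    using L2norm_sq_test_fun_ge[of n] norm_f by simp
  have "ennreal ((m / k)\<^sup>2 / 1024) \<le> ennreal (C\<^sup>2) * ennreal m"
    using L2norm_sq_berezin_H_test_fun_ge[of n] assms by (simp add: m_def k_def norm_f)
  then have "m\<^sup>2 / (1024 * k\<^sup>2) \<le> C\<^sup>2 * m"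
    using \<open>0 \<le> m\<close> by (simp add: power_divide ennreal_mult[symmetric] ennreal_le_iff)
  then have "m * m \<le> (1024 * k\<^sup>2 * C\<^sup>2) * m"
    by (simp add: pos_divide_le_eq k_def power2_eq_square mult_ac)
  then have "m \<le> 1024 * k\<^sup>2 * C\<^sup>2"
    using \<open>0 \<le> m\<close> by (cases "m = 0") (auto intro: mult_right_le_imp_le)
  with \<open>real n / 100 \<le> m\<close> show ?thesis
    by (simp add: k_def)
qed

theorem theorem2:
  shows "\<not> (\<exists>C::real. \<forall>f. L2_H f \<and> berezin_defined f \<longrightarrow>
            L2norm_sq_H (berezin_H f) \<le> ennreal (C\<^sup>2) * L2norm_sq_H f)"
proof
  assume "\<exists>C::real. \<forall>f. L2_H f \<and> berezin_defined f \<longrightarrow>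
            L2norm_sq_H (berezin_H f) \<le> ennreal (C\<^sup>2) * L2norm_sq_H f"
  then obtain C :: real where bounded: "\<And>f. L2_H f \<Longrightarrow> berezin_defined f \<Longrightarrow>
      L2norm_sq_H (berezin_H f) \<le> ennreal (C\<^sup>2) * L2norm_sq_H f"
    by blast
  obtain n :: nat where n: "102400 * (2^20 * pi\<^sup>2)\<^sup>2 * C\<^sup>2 < real n"
    using reals_Archimedean2 by blast
  have "real n \<le> 102400 * (2^20 * pi\<^sup>2)\<^sup>2 * C\<^sup>2"
    by (intro test_fun_count_le_if_berezin_bounded bounded L2_H_test_fun berezin_defined_test_fun)
  with n show False
    by linarith
qed

end
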